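(* Let $\rho\in(0,1)$, $\gamma>0$, $\lambda>0$, and let $$A_{\rho}(\lambda,t)=\frac{\gamma}{\pi}\int_0^{\infty}e^{-rt}\frac{\lambda^2r^{\rho-1}\sin\rho\pi}{(-r+\lambda\gamma r^{\rho}\cos\rho\pi+\lambda)^2+(\lambda\gamma r^{\rho}\sin\rho\pi)^2}dr$$ (the solution of $y'+\lambda(1+\gamma D_t^{\rho})y=0$, $y(0)=1$, with $D_t^\rho$ the Caputo derivative). Then (1) $A_{\rho}(\lambda,0)=1$ and $0<A_{\rho}(\lambda,t)<1$ for $t>0$; (2) $D_tA_{\rho}(\lambda,t)<0$ (for $t>0$).
   Context: $D_t=d/dt$; the Caputo derivative of order $\rho$ is $D_t^{\rho}y(t)=\frac{1}{\Gamma(1-\rho)}\int_0^t\frac{y'(\xi)}{(t-\xi)^{\rho}}d\xi$. *)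

theory Defs
  imports "HOL-Analysis.Analysis"
begin

definition A_rho :: "real \<Rightarrow> real \<Rightarrow> real \<Rightarrow> real \<Rightarrow> real" where
  "A_rho \<rho> \<gamma> lam t =
     \<gamma> / pi * (LBINT r:{0<..}.
        exp (- r * t) * (lam\<^sup>2 * r powr (\<rho> - 1) * sin (\<rho> * pi)) /
        ((- r + lam * \<gamma> * r powr \<rho> * cos (\<rho> * pi) + lam)\<^sup>2
          + (lam * \<gamma> * r powr \<rho> * sin (\<rho> * pi))\<^sup>2))"

end

theory Submission
  imports Defs "HOL-Complex_Analysis.Complex_Analysis" "HOL-Real_Asymp.Real_Asymp"
begin

(* With a = lam and b = lam * gamma, the integrand of A_rho is (lam / gamma) exp (- r t) phi r, where
   phi = spectral_density rho a b is the imaginary part of H (- r) for H z = 1 / (z (z + a + b z^rho)),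
   with the branch of z^rho cut along the negative imaginary axis.  On the closed upper half-plane
   minus 0 the denominator does not vanish (its imaginary part is positive off the positive axis),
   so H is holomorphic there; it is real on the positive axis, equals 1 / (a z) + O(|z|^(rho - 1))
   near 0 and is O(|z|^-2) at infinity.  Cauchy's theorem on the rectangle [-R, R] x [0, R],
   indented at 0, therefore gives int_0^oo phi = pi / a, i.e. A_rho lam 0 = 1.  As phi > 0, A_rho lam
   is the Laplace transform of a positive integrable function: it is positive, strictly below its
   value at t = 0, and has the negative derivative - (gamma / pi) int_0^oo r exp (- r t) phi r dr. *)

section \<open>Integrals over the positive half-line\<close>

lemma set_integral_pos:
  fixes f :: "real \<Rightarrow> real"
  assumes f: "set_integrable lborel A f" and A: "A \<in> sets lborel" "emeasure lborel A \<noteq> 0"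
    and pos: "\<And>x. x \<in> A \<Longrightarrow> 0 < f x"
  shows "0 < (LBINT x:A. f x)"
proof -
  let ?g = "\<lambda>x. indicator A x * f x"
  have nonneg: "AE x in lborel. 0 \<le> ?g x"
    using pos by (auto simp: indicator_def less_imp_le)
  have "integral\<^sup>L lborel ?g \<noteq> 0"
  proof
    assume "integral\<^sup>L lborel ?g = 0"
    then have "AE x in lborel. ?g x = 0"
      using integral_nonneg_eq_0_iff_AE[OF _ nonneg] f by (simp add: set_integrable_def)
    then have "AE x in lborel. x \<notin> A"
      by eventually_elim (use pos in \<open>force simp: indicator_def\<close>)
    then show False
      using A AE_iff_measurable[of A lborel "\<lambda>x. x \<notin> A"] by simp
  qed
  then show ?thesis
    using integral_nonneg_AE[OF nonneg] by (simp add: set_lebesgue_integral_def)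
qed

lemma set_integrable_bounded_weight:
  fixes f w :: "real \<Rightarrow> real"
  assumes f: "set_integrable lborel A f" and w: "w \<in> borel_measurable lborel"
    and bound: "\<And>x. x \<in> A \<Longrightarrow> \<bar>w x\<bar> \<le> C"
  shows "set_integrable lborel A (\<lambda>x. w x * f x)"
proof (rule set_integrable_bound[where f = "\<lambda>x. C * f x"])
  show "set_integrable lborel A (\<lambda>x. C * f x)"
    using f by (rule set_integrable_mult_right)
  have "(\<lambda>x. indicator A x * f x) \<in> borel_measurable lborel"
    using f by (simp add: set_integrable_def borel_measurable_integrable)
  then have "(\<lambda>x. w x * (indicator A x * f x)) \<in> borel_measurable lborel"
    using w by measurable
  then show "set_borel_measurable lborel A (\<lambda>x. w x * f x)"
    by (simp add: set_borel_measurable_def mult.left_commute)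
  show "AE x in lborel. x \<in> A \<longrightarrow> norm (w x * f x) \<le> norm (C * f x)"
    using bound order_trans[OF abs_ge_zero bound]
    by (auto simp: abs_mult intro!: mult_right_mono)
qed

lemma tendsto_indicator_Icc_exhaustion:
  "(\<lambda>n. indicator {1 / real (Suc n)..real (Suc n)} x :: real) \<longlonglongrightarrow> indicator {0<..} x"
proof (cases "0 < x")
  case True
  have "eventually (\<lambda>n. 1 / real (Suc n) \<le> x) sequentially"
    using order_tendstoD(2)[OF LIMSEQ_inverse_real_of_nat True]
    by eventually_elim (simp add: inverse_eq_divide)
  moreover have "eventually (\<lambda>n. x \<le> real (Suc n)) sequentially"
    using eventually_ge_at_top[of "nat \<lceil>x\<rceil>"] by eventually_elim linarith
  ultimately have "eventually (\<lambda>n. indicator {1 / real (Suc n)..real (Suc n)} x = (1 :: real)) sequentially"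
    by eventually_elim simp
  with True show ?thesis
    by (simp add: tendsto_eventually)
next
  case False
  then have "x \<notin> {1 / real (Suc n)..real (Suc n)}" for n
    using less_le_trans[of 0 "1 / real (Suc n)" x] by auto
  with False show ?thesis
    by simp
qed

lemma set_integral_Ioi_nonneg_limit:
  fixes f :: "real \<Rightarrow> real"
  assumes f: "continuous_on {0<..} f" "\<And>x. 0 < x \<Longrightarrow> 0 \<le> f x"
    and lim: "(\<lambda>n. integral {1 / real (Suc n)..real (Suc n)} f) \<longlonglongrightarrow> I"
  shows "set_integrable lborel {0<..} f" and "(LBINT x:{0<..}. f x) = I"
proof -
  define K where "K n = {1 / real (Suc n)..real (Suc n)}" for n
  define g where "g = (\<lambda>n x. indicator (K n) x * f x)"
  have K: "K n \<subseteq> {0<..}" for n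
    by (auto simp: K_def intro: less_le_trans[of 0 "1 / real (Suc n)"])
  have K_mono: "K m \<subseteq> K n" if "m \<le> n" for m n
    using that by (auto simp: K_def field_simps intro: order.trans)
  have K_int: "set_integrable lborel (K n) f" for n
    unfolding K_def by (rule borel_integrable_atLeastAtMost'[OF continuous_on_subset[OF f(1)]])
      (use K[of n] in \<open>simp add: K_def\<close>)
  have g_int: "integrable lborel (g n)" for n
    using K_int by (simp add: g_def set_integrable_def)
  have g_integral: "integral\<^sup>L lborel (g n) = integral (K n) f" for n
    using set_borel_integral_eq_integral(2)[OF K_int] by (simp add: g_def set_lebesgue_integral_def)
  have g_nonneg: "0 \<le> g n x" for n x
    using K f(2) by (auto simp: g_def indicator_def)
  have "g m x \<le> g n x" if "m \<le> n" for m n x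
    using K_mono[OF that] g_nonneg[of n x] by (cases "x \<in> K m") (auto simp: g_def)
  then have "AE x in lborel. mono (\<lambda>n. g n x)"
    by (intro AE_I2 monoI)
  moreover have "AE x in lborel. (\<lambda>n. g n x) \<longlonglongrightarrow> indicator {0<..} x * f x"
    unfolding g_def K_def by (intro AE_I2 tendsto_mult_right tendsto_indicator_Icc_exhaustion)
  moreover have "(\<lambda>n. integral\<^sup>L lborel (g n)) \<longlonglongrightarrow> I"
    using lim g_integral by (simp add: K_def)
  moreover have "(\<lambda>x. indicator {0<..} x * f x) \<in> borel_measurable lborel"
    using borel_measurable_continuous_on_indicator[OF _ f(1)] by simp
  ultimately have "integrable lborel (\<lambda>x. indicator {0<..} x * f x)"
      "integral\<^sup>L lborel (\<lambda>x. indicator {0<..} x * f x) = I"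
    by (rule integral_monotone_convergence_nonneg[OF g_int _ AE_I2[OF g_nonneg]])+
  then show "set_integrable lborel {0<..} f" "(LBINT x:{0<..}. f x) = I"
    by (simp_all add: set_integrable_def set_lebesgue_integral_def)
qed

lemma set_integral_Ioi_pos:
  fixes g :: "real \<Rightarrow> real"
  assumes "set_integrable lborel {0<..} g" "\<And>r. 0 < r \<Longrightarrow> 0 < g r"
  shows "0 < (LBINT r:{0<..}. g r)"
proof (rule set_integral_pos[OF assms(1)])
  have "{0<..<1} \<subseteq> {0::real<..}"
    by auto
  then have "emeasure lborel {0::real<..<1} \<le> emeasure lborel {0::real<..}"
    by (rule emeasure_mono) simp
  then show "emeasure lborel {0::real<..} \<noteq> 0"
    by auto
qed (use assms(2) in auto)

section \<open>Laplace transforms\<close>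

definition laplace_transform :: "(real \<Rightarrow> real) \<Rightarrow> real \<Rightarrow> real" where
  "laplace_transform f s = (LBINT r:{0<..}. exp (- r * s) * f r)"

lemma abs_exp_minus_one_minus_le: "\<bar>exp x - 1 - x\<bar> \<le> x\<^sup>2 * exp \<bar>x\<bar>" for x :: real
proof -
  obtain \<xi> where \<xi>: "\<bar>\<xi>\<bar> \<le> \<bar>x\<bar>" "exp x = (\<Sum>m<2. x ^ m / fact m) + exp \<xi> / fact 2 * x ^ 2"
    using Maclaurin_exp_le[of x 2] by blast
  then have "\<bar>exp x - 1 - x\<bar> = exp \<xi> / 2 * x\<^sup>2"
    by (simp add: numeral_2_eq_2)
  also have "\<dots> \<le> exp \<bar>x\<bar> * x\<^sup>2"
  proof -
    have "exp \<xi> \<le> exp \<bar>x\<bar>"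
      using \<xi>(1) by (simp add: order_trans[OF abs_ge_self])
    then have "exp \<xi> / 2 \<le> exp \<bar>x\<bar>"
      using exp_gt_zero[of \<xi>] by linarith
    then show ?thesis
      by (rule mult_right_mono) simp
  qed
  finally show ?thesis
    by (simp add: mult.commute)
qed

lemma mult_exp_minus_le:
  fixes r s :: real
  assumes "0 < s" "0 \<le> r"
  shows "r * exp (- r * s) \<le> 1 / s" and "r\<^sup>2 * exp (- r * s) \<le> 4 / s\<^sup>2"
proof -
  have linear: "r * exp (- r * \<sigma>) \<le> 1 / \<sigma>" if "0 < \<sigma>" for \<sigma>
  proof -
    have "r * \<sigma> \<le> exp (r * \<sigma>)"
      using exp_ge_add_one_self[of "r * \<sigma>"] by linarith
    then have "r * \<sigma> * exp (- r * \<sigma>) \<le> exp (r * \<sigma>) * exp (- r * \<sigma>)"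
      by (intro mult_right_mono) auto
    then show ?thesis
      using that by (simp add: field_simps flip: exp_add)
  qed
  then show "r * exp (- r * s) \<le> 1 / s"
    using assms(1) .
  have "(r * exp (- r * (s / 2)))\<^sup>2 \<le> (2 / s)\<^sup>2"
    using linear[of "s / 2"] assms by (intro power_mono) auto
  moreover have "(r * exp (- r * (s / 2)))\<^sup>2 = r\<^sup>2 * exp (- r * s)"
    by (simp add: power2_eq_square algebra_simps flip: exp_add)
  ultimately show "r\<^sup>2 * exp (- r * s) \<le> 4 / s\<^sup>2"
    by (simp add: power_divide)
qed

lemma exp_difference_quotient_le:
  fixes r t h :: real
  assumes "0 \<le> r" "h \<noteq> 0" "\<bar>h\<bar> \<le> t / 2"
  shows "\<bar>(exp (- r * (t + h)) - exp (- r * t)) / h + r * exp (- r * t)\<bar>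
    \<le> \<bar>h\<bar> * (r\<^sup>2 * exp (- r * (t / 2)))"
proof -
  have "(exp (- r * (t + h)) - exp (- r * t)) / h + r * exp (- r * t)
      = exp (- r * t) * (exp (- r * h) - 1 - (- r * h)) / h"
    using assms(2) by (simp add: field_simps distrib_left flip: exp_add)
  then have "\<bar>(exp (- r * (t + h)) - exp (- r * t)) / h + r * exp (- r * t)\<bar>
      = exp (- r * t) * \<bar>exp (- r * h) - 1 - (- r * h)\<bar> / \<bar>h\<bar>"
    by (simp add: abs_mult)
  also have "\<dots> \<le> exp (- r * t) * ((r * h)\<^sup>2 * exp (r * \<bar>h\<bar>)) / \<bar>h\<bar>"
    using abs_exp_minus_one_minus_le[of "- r * h"] assms(1)
    by (intro divide_right_mono mult_left_mono) (auto simp: abs_mult power2_eq_square)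
  also have "\<dots> = \<bar>h\<bar> * (r\<^sup>2 * (exp (- r * t) * exp (r * \<bar>h\<bar>)))"
    using assms(2) by (simp add: power2_eq_square field_simps abs_mult_self_eq)
  also have "\<dots> \<le> \<bar>h\<bar> * (r\<^sup>2 * exp (- r * (t / 2)))"
  proof -
    have "r * \<bar>h\<bar> \<le> r * (t / 2)"
      using assms by (intro mult_left_mono) auto
    then have "exp (- r * t) * exp (r * \<bar>h\<bar>) \<le> exp (- r * (t / 2))"
      by (simp add: mult_exp_exp)
    then show ?thesis
      by (intro mult_left_mono) auto
  qed
  finally show ?thesis .
qed

context
  fixes f :: "real \<Rightarrow> real"
  assumes f: "set_integrable lborel {0<..} f"
begin

lemma set_integrable_laplace_transform:
  assumes "0 \<le> s"
  shows "set_integrable lborel {0<..} (\<lambda>r. exp (- r * s) * f r)"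
  by (rule set_integrable_bounded_weight[OF f, where C = 1]) (use assms in auto)

lemma set_integrable_laplace_transform_moments:
  assumes s: "0 < s"
  shows "set_integrable lborel {0<..} (\<lambda>r. r * exp (- r * s) * f r)"
    and "set_integrable lborel {0<..} (\<lambda>r. r\<^sup>2 * exp (- r * s) * \<bar>f r\<bar>)"
  using set_integrable_bounded_weight[OF f, where C = "1 / s"]
    set_integrable_bounded_weight[OF set_integrable_abs[OF f], where C = "4 / s\<^sup>2"]
    mult_exp_minus_le[OF s]
  by auto

lemma laplace_transform_difference_quotient_le:
  assumes t: "0 < t" and h: "h \<noteq> 0" "\<bar>h\<bar> < t / 2"
  shows "\<bar>(laplace_transform f (t + h) - laplace_transform f t) / h
      + (LBINT r:{0<..}. r * exp (- r * t) * f r)\<bar>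
    \<le> \<bar>h\<bar> * (LBINT r:{0<..}. r\<^sup>2 * exp (- r * (t / 2)) * \<bar>f r\<bar>)"
proof -
  define q where "q r = 1 / h * (exp (- r * (t + h)) * f r) - 1 / h * (exp (- r * t) * f r)
    + r * exp (- r * t) * f r" for r
  have "0 \<le> t + h"
    using h by linarith
  then have integrable: "set_integrable lborel {0<..} (\<lambda>r. exp (- r * (t + h)) * f r)"
    "set_integrable lborel {0<..} (\<lambda>r. exp (- r * t) * f r)"
    "set_integrable lborel {0<..} (\<lambda>r. r * exp (- r * t) * f r)"
    using t set_integrable_laplace_transform set_integrable_laplace_transform_moments(1)
    by simp_all
  then have q: "set_integrable lborel {0<..} q"
    unfolding q_def by (intro set_integral_add set_integral_diff set_integrable_mult_right) auto
  have "(laplace_transform f (t + h) - laplace_transform f t) / h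
      + (LBINT r:{0<..}. r * exp (- r * t) * f r) = (LBINT r:{0<..}. q r)"
    using integrable unfolding q_def laplace_transform_def
    by (simp add: set_integral_add set_integral_diff diff_divide_distrib)
  also have "\<bar>\<dots>\<bar> \<le> (LBINT r:{0<..}. \<bar>q r\<bar>)"
    using set_integral_norm_bound[OF q] by simp
  also have "\<dots> \<le> (LBINT r:{0<..}. \<bar>h\<bar> * (r\<^sup>2 * exp (- r * (t / 2)) * \<bar>f r\<bar>))"
  proof (rule set_integral_mono)
    show "set_integrable lborel {0<..} (\<lambda>r. \<bar>q r\<bar>)"
      using q by (rule set_integrable_abs)
    show "set_integrable lborel {0<..} (\<lambda>r. \<bar>h\<bar> * (r\<^sup>2 * exp (- r * (t / 2)) * \<bar>f r\<bar>))"
      using set_integrable_laplace_transform_moments(2)[of "t / 2"] t by auto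
    fix r :: real assume "r \<in> {0<..}"
    have "q r = ((exp (- r * (t + h)) - exp (- r * t)) / h + r * exp (- r * t)) * f r"
      using h by (simp add: q_def field_simps)
    then have "\<bar>q r\<bar> = \<bar>(exp (- r * (t + h)) - exp (- r * t)) / h + r * exp (- r * t)\<bar> * \<bar>f r\<bar>"
      by (simp only: abs_mult)
    also have "\<dots> \<le> \<bar>h\<bar> * (r\<^sup>2 * exp (- r * (t / 2))) * \<bar>f r\<bar>"
      using \<open>r \<in> {0<..}\<close> h by (intro mult_right_mono exp_difference_quotient_le) auto
    finally show "\<bar>q r\<bar> \<le> \<bar>h\<bar> * (r\<^sup>2 * exp (- r * (t / 2)) * \<bar>f r\<bar>)"
      by (simp only: mult.assoc)
  qed
  also have "\<dots> = \<bar>h\<bar> * (LBINT r:{0<..}. r\<^sup>2 * exp (- r * (t / 2)) * \<bar>f r\<bar>)"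
    by simp
  finally show ?thesis .
qed

lemma has_real_derivative_laplace_transform:
  assumes t: "0 < t"
  shows "(laplace_transform f has_real_derivative
      - (LBINT r:{0<..}. r * exp (- r * t) * f r)) (at t)"
proof -
  define D where "D = (LBINT r:{0<..}. r * exp (- r * t) * f r)"
  define M where "M = (LBINT r:{0<..}. r\<^sup>2 * exp (- r * (t / 2)) * \<bar>f r\<bar>)"
  have "eventually (\<lambda>h. h \<noteq> 0 \<and> \<bar>h\<bar> < t / 2) (at (0::real))"
    unfolding eventually_at using t by (intro exI[of _ "t / 2"]) (auto simp: dist_real_def)
  then have "eventually (\<lambda>h. norm ((laplace_transform f (t + h) - laplace_transform f t) / h - - D)
      \<le> \<bar>h\<bar> * M) (at 0)"
    by eventually_elim (use laplace_transform_difference_quotient_le[OF t] in \<open>simp add: D_def M_def\<close>)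
  moreover have "((\<lambda>h. \<bar>h\<bar> * M) \<longlongrightarrow> 0) (at 0)"
    by (auto intro!: tendsto_eq_intros)
  ultimately have "((\<lambda>h. (laplace_transform f (t + h) - laplace_transform f t) / h - - D) \<longlongrightarrow> 0) (at 0)"
    by (rule Lim_null_comparison)
  then have "((\<lambda>h. (laplace_transform f (t + h) - laplace_transform f t) / h) \<longlongrightarrow> - D) (at 0)"
    by (rule LIM_zero_cancel)
  then show ?thesis
    by (simp add: DERIV_def D_def)
qed

end

context
  fixes f :: "real \<Rightarrow> real"
  assumes f: "set_integrable lborel {0<..} f" and f_pos: "\<And>r. 0 < r \<Longrightarrow> 0 < f r"
begin

lemma laplace_transform_pos:
  assumes "0 \<le> s"
  shows "0 < laplace_transform f s"
  unfolding laplace_transform_def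
  by (rule set_integral_Ioi_pos[OF set_integrable_laplace_transform[OF f assms]]) (simp add: f_pos)

lemma laplace_transform_less_laplace_transform_0:
  assumes "0 < s"
  shows "laplace_transform f s < laplace_transform f 0"
proof -
  have integrable: "set_integrable lborel {0<..} (\<lambda>r. exp (- r * s) * f r)"
    using set_integrable_laplace_transform[OF f] assms by simp
  have "0 < f r - exp (- r * s) * f r" if "0 < r" for r
  proof -
    have "exp (- r * s) < 1"
      using that assms by simp
    then show ?thesis
      using f_pos[OF that] by simp
  qed
  then have "0 < (LBINT r:{0<..}. f r - exp (- r * s) * f r)"
    using f integrable by (intro set_integral_Ioi_pos) auto
  then show ?thesis
    using set_integral_diff(2)[OF f integrable] by (simp add: laplace_transform_def)
qed

lemma laplace_transform_has_negative_derivative: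
  assumes "0 < t"
  shows "\<exists>D. (laplace_transform f has_real_derivative D) (at t) \<and> D < 0"
  using has_real_derivative_laplace_transform[OF f assms]
    set_integral_Ioi_pos[OF set_integrable_laplace_transform_moments(1)[OF f assms]] f_pos
  by auto

end

section \<open>A branch of z powr rho on the closed upper half-plane\<close>

(* Branches of arg z and z powr rho with cut along the negative imaginary axis: upper_powr is
   holomorphic near every nonzero point of the closed upper half-plane, where upper_arg ranges
   over [0, pi]. *)
definition upper_arg :: "complex \<Rightarrow> real" where
  "upper_arg z = Im (Ln (- \<i> * z)) + pi / 2"

definition upper_powr :: "complex \<Rightarrow> real \<Rightarrow> complex" where
  "upper_powr z \<rho> = exp (of_real \<rho> * (Ln (- \<i> * z) + \<i> * of_real (pi / 2)))"

lemma Ln_minus_ii_times_of_real: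
  assumes "0 < r"
  shows "Ln (- \<i> * of_real r) = of_real (ln r) - \<i> * of_real (pi / 2)"
    and "Ln (- \<i> * - of_real r) = of_real (ln r) + \<i> * of_real (pi / 2)"
  using Ln_times_of_real[OF assms, of "- \<i>"] Ln_times_of_real[OF assms, of "\<i>"] assms
  by (simp_all add: mult.commute Ln_of_real)

lemma upper_arg_of_real:
  assumes "0 < r"
  shows "upper_arg (of_real r) = 0" and "upper_arg (- of_real r) = pi"
  using Ln_minus_ii_times_of_real[OF assms] by (simp_all add: upper_arg_def)

lemma upper_arg_bounds:
  assumes "z \<noteq> 0" "0 \<le> Im z"
  shows "0 \<le> upper_arg z" "upper_arg z \<le> pi"
proof -
  have "\<bar>Im (Ln (- \<i> * z))\<bar> \<le> pi / 2"
    using Re_Ln_pos_le[of "- \<i> * z"] assms by simp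
  then show "0 \<le> upper_arg z" "upper_arg z \<le> pi"
    unfolding upper_arg_def by auto
qed

lemma polar_upper_arg:
  assumes "z \<noteq> 0"
  shows "z = of_real (norm z) * cis (upper_arg z)"
proof -
  have "- \<i> * z = exp (Ln (- \<i> * z))"
    using assms by simp
  also have "\<dots> = of_real (norm z) * cis (Im (Ln (- \<i> * z)))"
    using assms by (simp add: exp_eq_polar norm_mult)
  finally have polar: "- \<i> * z = of_real (norm z) * cis (Im (Ln (- \<i> * z)))" .
  have "z = \<i> * (- \<i> * z)"
    by simp
  also have "\<dots> = of_real (norm z) * (\<i> * cis (Im (Ln (- \<i> * z))))"
    by (subst polar) (simp add: algebra_simps)
  also have "\<i> * cis (Im (Ln (- \<i> * z))) = cis (upper_arg z)"
    by (simp add: upper_arg_def complex_eq_iff cos_add sin_add)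
  finally show ?thesis .
qed

lemma upper_powr_polar:
  assumes "z \<noteq> 0"
  shows "upper_powr z \<rho> = of_real (norm z powr \<rho>) * cis (\<rho> * upper_arg z)"
proof -
  have "upper_powr z \<rho> = exp (of_real (\<rho> * Re (Ln (- \<i> * z))) + \<i> * of_real (\<rho> * upper_arg z))"
    unfolding upper_powr_def upper_arg_def
    by (rule arg_cong[where f = exp]) (simp add: complex_eq_iff algebra_simps)
  also have "\<dots> = of_real (exp (\<rho> * Re (Ln (- \<i> * z)))) * cis (\<rho> * upper_arg z)"
    by (subst exp_eq_polar) simp
  also have "exp (\<rho> * Re (Ln (- \<i> * z))) = norm z powr \<rho>"
    using assms by (simp add: norm_mult powr_def)
  finally show ?thesis .
qed

lemma norm_upper_powr: "z \<noteq> 0 \<Longrightarrow> norm (upper_powr z \<rho>) = norm z powr \<rho>"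
  by (simp add: upper_powr_polar norm_mult)

lemma upper_powr_of_real:
  assumes "0 < r"
  shows "upper_powr (of_real r) \<rho> = of_real (r powr \<rho>)"
    and "upper_powr (- of_real r) \<rho> = of_real (r powr \<rho>) * cis (\<rho> * pi)"
  using assms by (simp_all add: upper_powr_polar upper_arg_of_real)

lemma has_field_derivative_Ln_minus_ii:
  assumes "z \<noteq> 0" "0 \<le> Im z"
  shows "((\<lambda>w. Ln (- \<i> * w)) has_field_derivative 1 / z) (at z)"
proof -
  have "- \<i> * z \<notin> \<real>\<^sub>\<le>\<^sub>0"
    using assms by (auto simp: complex_nonpos_Reals_iff complex_eq_iff)
  moreover have "((\<lambda>w. - \<i> * w) has_field_derivative - \<i>) (at z)"
    by (auto intro!: derivative_eq_intros)
  ultimately have "((\<lambda>w. Ln (- \<i> * w)) has_field_derivative inverse (- \<i> * z) * - \<i>) (at z)"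
    by (rule DERIV_chain2[OF has_field_derivative_Ln])
  moreover have "inverse (- \<i> * z) * - \<i> = 1 / z"
    using assms by (simp add: field_simps)
  ultimately show ?thesis
    by (rule DERIV_cong)
qed

lemma upper_powr_field_differentiable:
  assumes "z \<noteq> 0" "0 \<le> Im z"
  shows "(\<lambda>w. upper_powr w \<rho>) field_differentiable at z"
proof -
  have "(\<lambda>w. of_real \<rho> * (Ln (- \<i> * w) + \<i> * of_real (pi / 2))) field_differentiable at z"
    using has_field_derivative_Ln_minus_ii[OF assms]
    by (intro field_differentiable_mult field_differentiable_add field_differentiable_const)
      (auto simp: field_differentiable_def)
  from field_differentiable_compose[OF this field_differentiable_within_exp]
  show ?thesis
    by (simp add: upper_powr_def o_def)
qed

section \<open>The contour kernel\<close>

definition contour_kernel_den :: "real \<Rightarrow> real \<Rightarrow> real \<Rightarrow> complex \<Rightarrow> complex" where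
  "contour_kernel_den \<rho> a b z = z + of_real a + of_real b * upper_powr z \<rho>"

definition contour_kernel :: "real \<Rightarrow> real \<Rightarrow> real \<Rightarrow> complex \<Rightarrow> complex" where
  "contour_kernel \<rho> a b z = 1 / (z * contour_kernel_den \<rho> a b z)"

definition spectral_density :: "real \<Rightarrow> real \<Rightarrow> real \<Rightarrow> real \<Rightarrow> real" where
  "spectral_density \<rho> a b r = b * r powr (\<rho> - 1) * sin (\<rho> * pi) /
     ((- r + b * r powr \<rho> * cos (\<rho> * pi) + a)\<^sup>2 + (b * r powr \<rho> * sin (\<rho> * pi))\<^sup>2)"

lemma Im_contour_kernel_of_real:
  assumes "0 < r"
  shows "Im (contour_kernel \<rho> a b (of_real r)) = 0"
  using assms by (simp add: contour_kernel_def contour_kernel_den_def upper_powr_of_real)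

lemma Im_contour_kernel_minus_of_real:
  assumes "0 < r"
  shows "Im (contour_kernel \<rho> a b (- of_real r)) = spectral_density \<rho> a b r"
proof -
  define X where "X = - r + b * r powr \<rho> * cos (\<rho> * pi) + a"
  define Y where "Y = b * r powr \<rho> * sin (\<rho> * pi)"
  have "contour_kernel_den \<rho> a b (- of_real r) = Complex X Y"
    using assms by (simp add: contour_kernel_den_def upper_powr_of_real X_def Y_def complex_eq_iff)
  moreover have "of_real r * Complex X Y = Complex (r * X) (r * Y)"
    by (simp add: complex_eq_iff)
  ultimately have "contour_kernel \<rho> a b (- of_real r) = - 1 / Complex (r * X) (r * Y)"
    by (simp add: contour_kernel_def)
  also have "Im \<dots> = r * Y / ((r * X)\<^sup>2 + (r * Y)\<^sup>2)"
    by (simp add: Im_divide)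
  also have "\<dots> = (r * Y) / (r * (r * (X\<^sup>2 + Y\<^sup>2)))"
    by (simp add: power2_eq_square algebra_simps)
  also have "\<dots> = Y / (r * (X\<^sup>2 + Y\<^sup>2))"
    using assms by simp
  also have "\<dots> = spectral_density \<rho> a b r"
    using assms by (simp add: spectral_density_def X_def Y_def powr_diff field_simps)
  finally show ?thesis .
qed

context
  fixes \<rho> a b :: real
  assumes \<rho>: "0 < \<rho>" "\<rho> < 1" and ab: "0 < a" "0 < b"
begin

lemma contour_kernel_den_nonzero:
  assumes "z \<noteq> 0" "0 \<le> Im z"
  shows "contour_kernel_den \<rho> a b z \<noteq> 0"
proof -
  have z: "z = of_real (norm z) * cis (upper_arg z)"
    by (rule polar_upper_arg[OF assms(1)])
  have Re: "Re (contour_kernel_den \<rho> a b z) =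
      norm z * cos (upper_arg z) + a + b * norm z powr \<rho> * cos (\<rho> * upper_arg z)"
    unfolding contour_kernel_den_def upper_powr_polar[OF assms(1)] by (subst (1) z) simp
  have Im: "Im (contour_kernel_den \<rho> a b z) =
      norm z * sin (upper_arg z) + b * norm z powr \<rho> * sin (\<rho> * upper_arg z)"
    unfolding contour_kernel_den_def upper_powr_polar[OF assms(1)] by (subst (1) z) simp
  have pos: "0 < norm z" "0 < b * norm z powr \<rho>"
    using assms ab by auto
  show ?thesis
  proof (cases "upper_arg z = 0")
    case True
    then have "Re (contour_kernel_den \<rho> a b z) = norm z + a + b * norm z powr \<rho>"
      using Re by simp
    then have "0 < Re (contour_kernel_den \<rho> a b z)"
      using pos ab by linarith
    then show ?thesis
      by auto
  next
    case False
    then have \<theta>: "0 < upper_arg z" "upper_arg z \<le> pi"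
      using upper_arg_bounds[OF assms] by auto
    have "\<rho> * upper_arg z < upper_arg z"
      using \<theta> \<rho> by simp
    then have "\<rho> * upper_arg z < pi"
      using \<theta> by linarith
    moreover have "0 < \<rho> * upper_arg z"
      using \<theta> \<rho> by simp
    ultimately have "0 < sin (\<rho> * upper_arg z)"
      by (intro sin_gt_zero)
    moreover have "0 \<le> sin (upper_arg z)"
      using \<theta> by (intro sin_ge_zero) auto
    ultimately have "0 < Im (contour_kernel_den \<rho> a b z)"
      using Im pos by (simp add: add_nonneg_pos)
    then show ?thesis
      by auto
  qed
qed

lemma contour_kernel_field_differentiable:
  assumes "z \<noteq> 0" "0 \<le> Im z"
  shows "contour_kernel \<rho> a b field_differentiable at z"
  unfolding contour_kernel_def[abs_def] contour_kernel_den_def[abs_def]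
  using assms contour_kernel_den_nonzero[OF assms] upper_powr_field_differentiable[OF assms]
  by (intro field_differentiable_divide field_differentiable_mult field_differentiable_add
      field_differentiable_const field_differentiable_ident) (auto simp: contour_kernel_den_def)

lemma continuous_on_contour_kernel: "continuous_on {z. 0 \<le> Im z \<and> z \<noteq> 0} (contour_kernel \<rho> a b)"
  by (rule continuous_at_imp_continuous_on)
    (auto intro: field_differentiable_imp_continuous_at contour_kernel_field_differentiable)

lemma spectral_density_pos:
  assumes "0 < r"
  shows "0 < spectral_density \<rho> a b r"
proof -
  have "0 < sin (\<rho> * pi)"
    using \<rho> by (intro sin_gt_zero) auto
  then show ?thesis
    using assms ab by (simp add: spectral_density_def add_nonneg_pos)
qed

lemma continuous_on_spectral_density: "continuous_on {0<..} (spectral_density \<rho> a b)"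
proof -
  have "0 < sin (\<rho> * pi)"
    using \<rho> by (intro sin_gt_zero) auto
  then show ?thesis
    unfolding spectral_density_def[abs_def] using ab
    by (intro continuous_intros) (auto simp: add_nonneg_pos)
qed

lemma norm_contour_kernel_le_far:
  assumes R: "0 < R" "R \<le> norm z" and small: "a / R + b * R powr (\<rho> - 1) \<le> 1 / 2"
  shows "norm (contour_kernel \<rho> a b z) \<le> 2 / R\<^sup>2"
proof -
  define n where "n = norm z"
  have n: "0 < n" "R \<le> n" "z \<noteq> 0"
    using R by (auto simp: n_def)
  have "n powr (\<rho> - 1) \<le> R powr (\<rho> - 1)"
    using n R \<rho> by (intro powr_mono2') auto
  moreover have "n powr \<rho> = n * n powr (\<rho> - 1)"
    using n by (simp add: powr_diff)
  ultimately have "b * n powr \<rho> \<le> n * (b * R powr (\<rho> - 1))"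
    using n ab by (simp add: mult_left_mono)
  moreover have "a \<le> n * (a / R)"
    using n R ab by (simp add: field_simps)
  ultimately have "a + b * n powr \<rho> \<le> n * (a / R + b * R powr (\<rho> - 1))"
    by (simp add: algebra_simps)
  also have "\<dots> \<le> n / 2"
    using small n by (simp add: mult_left_mono[of _ "1/2" n, simplified])
  finally have rest: "norm (of_real a + of_real b * upper_powr z \<rho>) \<le> n / 2"
    using norm_triangle_ineq[of "of_real a" "of_real b * upper_powr z \<rho>"] n ab
    by (simp add: norm_mult norm_upper_powr n_def)
  have den: "n / 2 \<le> norm (contour_kernel_den \<rho> a b z)"
    using norm_diff_ineq[of z "of_real a + of_real b * upper_powr z \<rho>"] rest
    by (simp add: contour_kernel_den_def n_def add.assoc)
  have "norm (contour_kernel \<rho> a b z) = 1 / (n * norm (contour_kernel_den \<rho> a b z))"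
    by (simp add: contour_kernel_def norm_divide norm_mult n_def)
  also have "\<dots> \<le> 1 / (n * (n / 2))"
    using den n by (intro divide_left_mono mult_left_mono mult_pos_pos) auto
  also have "\<dots> \<le> 1 / (R * (R / 2))"
    using n R by (intro divide_left_mono mult_mono) auto
  finally show ?thesis
    by (simp add: power2_eq_square)
qed

lemma norm_contour_kernel_minus_pole_le_near:
  assumes e: "0 < e" "e / 2 \<le> norm z" "norm z \<le> e" and small: "e + b * e powr \<rho> \<le> a / 2"
  shows "norm (contour_kernel \<rho> a b z - 1 / (of_real a * z)) \<le> 2 * (1 + b * (e / 2) powr (\<rho> - 1)) / a\<^sup>2"
proof -
  define n where "n = norm z"
  define w where "w = z + of_real b * upper_powr z \<rho>"
  have n: "0 < n" "e / 2 \<le> n" "n \<le> e" "z \<noteq> 0"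
    using e by (auto simp: n_def)
  have "n powr \<rho> \<le> e powr \<rho>"
    using n \<rho> by (intro powr_mono2) auto
  then have "n + b * n powr \<rho> \<le> a / 2"
    using small n ab mult_left_mono[of "n powr \<rho>" "e powr \<rho>" b] by linarith
  have w: "norm w \<le> n + b * n powr \<rho>"
    using norm_triangle_ineq[of z "of_real b * upper_powr z \<rho>"] ab n
    by (simp add: w_def norm_mult norm_upper_powr n_def)
  have den: "a / 2 \<le> norm (contour_kernel_den \<rho> a b z)"
    using norm_diff_ineq[of "of_real a" w] w \<open>n + b * n powr \<rho> \<le> a / 2\<close> ab
    by (simp add: contour_kernel_den_def w_def algebra_simps)
  then have "contour_kernel_den \<rho> a b z \<noteq> 0"
    using ab by auto
  then have "contour_kernel \<rho> a b z - 1 / (of_real a * z) =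
      (of_real a - contour_kernel_den \<rho> a b z) / (of_real a * z * contour_kernel_den \<rho> a b z)"
    using n ab by (simp add: contour_kernel_def divide_simps)
  also have "of_real a - contour_kernel_den \<rho> a b z = - w"
    by (simp add: contour_kernel_den_def w_def)
  finally have "norm (contour_kernel \<rho> a b z - 1 / (of_real a * z)) = norm w / (a * n * norm (contour_kernel_den \<rho> a b z))"
    using ab by (simp add: norm_divide norm_mult n_def)
  also have "\<dots> \<le> (n + b * n powr \<rho>) / (a * n * (a / 2))"
    using w den n ab by (intro frac_le mult_left_mono) auto
  also have "\<dots> = 2 * (1 + b * n powr (\<rho> - 1)) / a\<^sup>2"
    using n ab by (simp add: powr_diff power2_eq_square field_simps)
  also have "\<dots> \<le> 2 * (1 + b * (e / 2) powr (\<rho> - 1)) / a\<^sup>2"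
    using n \<rho> e ab by (intro divide_right_mono mult_left_mono add_left_mono powr_mono2') auto
  finally show ?thesis .
qed

end

section \<open>Contour integration\<close>

lemma contour_integral_pentagon_eq_0:
  fixes f :: "complex \<Rightarrow> complex"
  assumes f: "continuous_on S f" "\<And>z. z \<in> S \<Longrightarrow> f field_differentiable at z"
    and S: "convex S" and p: "p1 \<in> S" "p2 \<in> S" "p3 \<in> S" "p4 \<in> S" "p5 \<in> S"
  shows "contour_integral (linepath p1 p2) f + contour_integral (linepath p2 p3) f
       + contour_integral (linepath p3 p4) f + contour_integral (linepath p4 p5) f
       + contour_integral (linepath p5 p1) f = 0"
proof -
  have I: "(f has_contour_integral contour_integral (linepath x y) f) (linepath x y)"
    if "x \<in> S" "y \<in> S" for x y
    using continuous_on_subset[OF f(1) closed_segment_subset[OF that S]]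
    by (intro has_contour_integral_integral contour_integrable_continuous_linepath)
  let ?g = "linepath p1 p2 +++ (linepath p2 p3 +++ (linepath p3 p4 +++
              (linepath p4 p5 +++ linepath p5 p1)))"
  have "(f has_contour_integral (contour_integral (linepath p1 p2) f
       + (contour_integral (linepath p2 p3) f + (contour_integral (linepath p3 p4) f
       + (contour_integral (linepath p4 p5) f + contour_integral (linepath p5 p1) f))))) ?g"
    by (intro has_contour_integral_join I p valid_path_join valid_path_linepath) auto
  moreover have "(f has_contour_integral 0) ?g"
  proof (rule Cauchy_theorem_convex[OF f(1) S, of "{}"])
    show "valid_path ?g"
      by (intro valid_path_join valid_path_linepath) auto
    show "path_image ?g \<subseteq> S"
      using closed_segment_subset[OF _ _ S] p by (simp add: path_image_join)
  qed (use f(2) interior_subset in auto)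
  ultimately show ?thesis
    using has_contour_integral_unique by (simp add: add.assoc)
qed

lemma convex_diagonal_halfplanes:
  shows "convex {z::complex. e \<le> Im z - Re z}" and "convex {z::complex. e \<le> Im z + Re z}"
proof -
  have "{z::complex. e \<le> Im z - Re z} = {z. e \<le> inner (Complex (- 1) 1) z}"
    and "{z::complex. e \<le> Im z + Re z} = {z. e \<le> inner (Complex 1 1) z}"
    by (auto simp: inner_complex_def)
  then show "convex {z::complex. e \<le> Im z - Re z}" "convex {z::complex. e \<le> Im z + Re z}"
    by (simp_all add: convex_halfspace_ge)
qed

lemma Im_contour_integral_linepath_Reals:
  assumes "p \<in> \<real>" "q \<in> \<real>" "Re p < Re q" and f: "continuous_on {Re p..Re q} (\<lambda>x. f (of_real x))"
  shows "Im (contour_integral (linepath p q) f) = integral {Re p..Re q} (\<lambda>x. Im (f (of_real x)))"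
proof -
  have "(\<lambda>x. f (of_real x)) integrable_on {Re p..Re q}"
    using f by (rule integrable_continuous_interval)
  from has_integral_Im[OF integrable_integral[OF this]]
  show ?thesis
    using contour_integral_linepath_Reals_eq[OF assms(1-3)] by (simp add: integral_unique)
qed

context
  fixes \<rho> a b :: real
  assumes \<rho>: "0 < \<rho>" "\<rho> < 1" and ab: "0 < a" "0 < b"
begin

abbreviation kernel_integral :: "complex \<Rightarrow> complex \<Rightarrow> complex" where
  "kernel_integral p q \<equiv> contour_integral (linepath p q) (contour_kernel \<rho> a b)"

lemma contour_kernel_has_contour_integral:
  assumes "closed_segment p q \<subseteq> {z. 0 \<le> Im z \<and> z \<noteq> 0}"
  shows "(contour_kernel \<rho> a b has_contour_integral kernel_integral p q) (linepath p q)"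
  using continuous_on_subset[OF continuous_on_contour_kernel[OF \<rho> ab] assms]
  by (intro has_contour_integral_integral contour_integrable_continuous_linepath)

lemma kernel_integral_indented_rectangle:
  assumes e: "0 < e" "e < R"
  shows "kernel_integral (- of_real R) (- of_real e)
       + (kernel_integral (- of_real e) (\<i> * of_real e) + kernel_integral (\<i> * of_real e) (of_real e))
       + kernel_integral (of_real e) (of_real R)
       + (kernel_integral (of_real R) (of_real R + \<i> * of_real R)
          + kernel_integral (of_real R + \<i> * of_real R) (\<i> * of_real R)
          + kernel_integral (\<i> * of_real R) (- of_real R + \<i> * of_real R)
          + kernel_integral (- of_real R + \<i> * of_real R) (- of_real R)) = 0" (is "?lhs = 0")
proof -
  \<comment> \<open>The contour is split along [i e, i R] into two convex pentagons that avoid 0.\<close>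
  define H where "H = {z. 0 \<le> Im z \<and> z \<noteq> 0}"
  define SL where "SL = {z. 0 \<le> Im z} \<inter> {z. Re z \<le> 0} \<inter> {z::complex. e \<le> Im z - Re z}"
  define SR where "SR = {z. 0 \<le> Im z} \<inter> {z. 0 \<le> Re z} \<inter> {z::complex. e \<le> Im z + Re z}"
  have convex: "convex SL" "convex SR"
    unfolding SL_def SR_def
    by (intro convex_Int convex_halfspace_Im_ge convex_halfspace_Re_le convex_halfspace_Re_ge
        convex_diagonal_halfplanes)+
  have sub: "SL \<subseteq> H" "SR \<subseteq> H"
    using e by (auto simp: SL_def SR_def H_def)
  have holo: "continuous_on S (contour_kernel \<rho> a b)"
    "\<And>z. z \<in> S \<Longrightarrow> contour_kernel \<rho> a b field_differentiable at z" if "S \<subseteq> H" for S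
    using that continuous_on_subset[OF continuous_on_contour_kernel[OF \<rho> ab]]
      contour_kernel_field_differentiable[OF \<rho> ab] by (auto simp: H_def)
  have left: "kernel_integral (- of_real R) (- of_real e) + kernel_integral (- of_real e) (\<i> * of_real e)
      + kernel_integral (\<i> * of_real e) (\<i> * of_real R)
      + kernel_integral (\<i> * of_real R) (- of_real R + \<i> * of_real R)
      + kernel_integral (- of_real R + \<i> * of_real R) (- of_real R) = 0" (is "?left = 0")
    by (rule contour_integral_pentagon_eq_0[OF holo[OF sub(1)] convex(1)])
      (use e in \<open>auto simp: SL_def\<close>)
  have right: "kernel_integral (of_real e) (of_real R) + kernel_integral (of_real R) (of_real R + \<i> * of_real R)
      + kernel_integral (of_real R + \<i> * of_real R) (\<i> * of_real R)
      + kernel_integral (\<i> * of_real R) (\<i> * of_real e) + kernel_integral (\<i> * of_real e) (of_real e) = 0"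
    (is "?right = 0")
    by (rule contour_integral_pentagon_eq_0[OF holo[OF sub(2)] convex(2)])
      (use e in \<open>auto simp: SR_def\<close>)
  have "closed_segment (\<i> * of_real e) (\<i> * of_real R) \<subseteq> SL"
    by (rule closed_segment_subset[OF _ _ convex(1)]) (use e in \<open>auto simp: SL_def\<close>)
  with holo(1)[OF sub(1)] have "continuous_on (closed_segment (\<i> * of_real e) (\<i> * of_real R))
      (contour_kernel \<rho> a b)"
    by (rule continuous_on_subset)
  then have reverse: "kernel_integral (\<i> * of_real R) (\<i> * of_real e)
      + kernel_integral (\<i> * of_real e) (\<i> * of_real R) = 0" (is "?reverse = 0")
    by (simp add: contour_integral_reverse_linepath)
  have "?lhs = ?left + ?right - ?reverse"
    by (simp add: algebra_simps)
  with left right reverse show ?thesis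
    by simp
qed

lemma norm_kernel_integral_le_far:
  assumes Q: "convex Q" "Q \<subseteq> {z. 0 \<le> Im z \<and> R \<le> norm z}" "p \<in> Q" "q \<in> Q"
    and R: "0 < R" and small: "a / R + b * R powr (\<rho> - 1) \<le> 1 / 2"
  shows "norm (kernel_integral p q) \<le> 2 / R\<^sup>2 * norm (q - p)"
proof (rule has_contour_integral_bound_linepath)
  have "closed_segment p q \<subseteq> Q"
    by (rule closed_segment_subset[OF Q(3,4,1)])
  then show "(contour_kernel \<rho> a b has_contour_integral kernel_integral p q) (linepath p q)"
    "\<And>z. z \<in> closed_segment p q \<Longrightarrow> norm (contour_kernel \<rho> a b z) \<le> 2 / R\<^sup>2"
    using Q(2) R norm_contour_kernel_le_far[OF \<rho> ab R _ small]
    by (auto intro!: contour_kernel_has_contour_integral)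
qed simp

lemma norm_kernel_integral_minus_log_le_near:
  assumes Q: "convex Q" "Q \<subseteq> {z. 0 \<le> Im z \<and> e / 2 \<le> norm z \<and> norm z \<le> e}" "p \<in> Q" "q \<in> Q"
    and e: "0 < e" and small: "e + b * e powr \<rho> \<le> a / 2"
  shows "norm (kernel_integral p q - (Ln (- \<i> * q) - Ln (- \<i> * p)) / of_real a)
         \<le> 2 * (1 + b * (e / 2) powr (\<rho> - 1)) / a\<^sup>2 * norm (q - p)"
proof -
  have segment: "closed_segment p q \<subseteq> Q"
    by (rule closed_segment_subset[OF Q(3,4,1)])
  then have H: "closed_segment p q \<subseteq> {z. 0 \<le> Im z \<and> z \<noteq> 0}"
    using Q(2) e by fastforce
  define F where "F w = Ln (- \<i> * w) / of_real a" for w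
  have "((\<lambda>z. 1 / (of_real a * z)) has_contour_integral
      F (pathfinish (linepath p q)) - F (pathstart (linepath p q))) (linepath p q)"
  proof (rule contour_integral_primitive[where S = "closed_segment p q"])
    fix z assume "z \<in> closed_segment p q"
    then have "(F has_field_derivative 1 / z / of_real a) (at z)"
      using H unfolding F_def[abs_def] by (intro DERIV_cdivide has_field_derivative_Ln_minus_ii) auto
    then show "(F has_field_derivative 1 / (of_real a * z)) (at z within closed_segment p q)"
      by (auto intro: has_field_derivative_at_within simp: mult.commute)
  qed auto
  then have "((\<lambda>z. 1 / (of_real a * z)) has_contour_integral
      (Ln (- \<i> * q) - Ln (- \<i> * p)) / of_real a) (linepath p q)"
    by (simp add: F_def diff_divide_distrib)
  from has_contour_integral_diff[OF contour_kernel_has_contour_integral[OF H] this]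
  show ?thesis
  proof (rule has_contour_integral_bound_linepath[where B = "2 * (1 + b * (e / 2) powr (\<rho> - 1)) / a\<^sup>2"])
    fix z assume "z \<in> closed_segment p q"
    then show "norm (contour_kernel \<rho> a b z - 1 / (of_real a * z)) \<le> 2 * (1 + b * (e / 2) powr (\<rho> - 1)) / a\<^sup>2"
      using segment Q(2) norm_contour_kernel_minus_pole_le_near[OF \<rho> ab e _ _ small] by auto
  qed (use ab in simp)
qed

lemma Im_kernel_integral_real_axis:
  assumes "0 < e" "e < R"
  shows "Im (kernel_integral (- of_real R) (- of_real e)) = integral {e..R} (spectral_density \<rho> a b)"
    and "Im (kernel_integral (of_real e) (of_real R)) = 0"
proof -
  have cont: "continuous_on {x..y} (\<lambda>t. contour_kernel \<rho> a b (of_real t))" if "0 < x \<or> y < 0" for x y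
    by (rule continuous_on_compose2[OF continuous_on_contour_kernel[OF \<rho> ab]])
      (use that in \<open>auto intro!: continuous_intros\<close>)
  have "Im (kernel_integral (- of_real R) (- of_real e)) =
      integral {- R..- e} (\<lambda>t. Im (contour_kernel \<rho> a b (of_real t)))"
    using assms cont[of "- R" "- e"] by (subst Im_contour_integral_linepath_Reals) auto
  also have "\<dots> = integral {e..R} (\<lambda>t. Im (contour_kernel \<rho> a b (- of_real t)))"
    using Henstock_Kurzweil_Integration.integral_reflect_real[of R e "\<lambda>t. Im (contour_kernel \<rho> a b (- of_real t))"] by simp
  also have "\<dots> = integral {e..R} (spectral_density \<rho> a b)"
    using assms by (intro integral_cong) (simp add: Im_contour_kernel_minus_of_real)
  finally show "Im (kernel_integral (- of_real R) (- of_real e)) = integral {e..R} (spectral_density \<rho> a b)" .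
  have "Im (kernel_integral (of_real e) (of_real R)) =
      integral {e..R} (\<lambda>t. Im (contour_kernel \<rho> a b (of_real t)))"
    using assms cont[of e R] by (subst Im_contour_integral_linepath_Reals) auto
  also have "\<dots> = integral {e..R} (\<lambda>t. 0)"
    using assms by (intro integral_cong) (simp add: Im_contour_kernel_of_real)
  finally show "Im (kernel_integral (of_real e) (of_real R)) = 0"
    by simp
qed

lemma norm_kernel_integral_small_detour:
  assumes e: "0 < e" and small: "e + b * e powr \<rho> \<le> a / 2"
  defines "K \<equiv> 2 * (1 + b * (e / 2) powr (\<rho> - 1)) / a\<^sup>2"
  shows "norm (kernel_integral (- of_real e) (\<i> * of_real e)
      + kernel_integral (\<i> * of_real e) (of_real e) + \<i> * of_real pi / of_real a) \<le> 4 * e * K"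
proof -
  define Q1 where "Q1 = {z. 0 \<le> Im z} \<inter> {z::complex. e \<le> Im z - Re z} \<inter> cball 0 e"
  define Q2 where "Q2 = {z. 0 \<le> Im z} \<inter> {z::complex. e \<le> Im z + Re z} \<inter> cball 0 e"
  have "e \<le> 2 * norm z" if "e \<le> Im z - Re z \<or> e \<le> Im z + Re z" for z :: complex
    using that abs_Re_le_cmod[of z] abs_Im_le_cmod[of z] by linarith
  then have annulus: "Q1 \<subseteq> {z. 0 \<le> Im z \<and> e / 2 \<le> norm z \<and> norm z \<le> e}"
    "Q2 \<subseteq> {z. 0 \<le> Im z \<and> e / 2 \<le> norm z \<and> norm z \<le> e}"
    unfolding Q1_def Q2_def by fastforce+
  have convex: "convex Q1" "convex Q2"
    unfolding Q1_def Q2_def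
    by (intro convex_Int convex_halfspace_Im_ge convex_diagonal_halfplanes convex_cball)+
  define D1 where "D1 = (Ln (- \<i> * (\<i> * of_real e)) - Ln (- \<i> * - of_real e)) / of_real a"
  define D2 where "D2 = (Ln (- \<i> * of_real e) - Ln (- \<i> * (\<i> * of_real e))) / of_real a"
  have near: "norm (kernel_integral p q - (Ln (- \<i> * q) - Ln (- \<i> * p)) / of_real a) \<le> K * (2 * e)"
    if "convex Q" "Q \<subseteq> {z. 0 \<le> Im z \<and> e / 2 \<le> norm z \<and> norm z \<le> e}" "p \<in> Q" "q \<in> Q"
      "norm (q - p) \<le> 2 * e" for Q p q
    using norm_kernel_integral_minus_log_le_near[OF that(1-4) e small] that(5)
      mult_left_mono[OF that(5), of K] ab
    by (simp add: K_def)
  have G1: "norm (kernel_integral (- of_real e) (\<i> * of_real e) - D1) \<le> K * (2 * e)"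
    unfolding D1_def
    using norm_triangle_ineq[of "\<i> * of_real e" "of_real e"] e
    by (intro near[OF convex(1) annulus(1)]) (auto simp: Q1_def norm_mult)
  have G2: "norm (kernel_integral (\<i> * of_real e) (of_real e) - D2) \<le> K * (2 * e)"
    unfolding D2_def
    using norm_triangle_ineq4[of "of_real e" "\<i> * of_real e"] e
    by (intro near[OF convex(2) annulus(2)]) (auto simp: Q2_def norm_mult)
  have "D1 + D2 = (Ln (- \<i> * of_real e) - Ln (- \<i> * - of_real e)) / of_real a"
    unfolding D1_def D2_def by (simp only: diff_divide_distrib) simp
  also have "\<dots> = - \<i> * of_real pi / of_real a"
    unfolding Ln_minus_ii_times_of_real[OF e] by (simp add: algebra_simps)
  finally have "D1 + D2 = - \<i> * of_real pi / of_real a" .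
  then have "kernel_integral (- of_real e) (\<i> * of_real e)
      + kernel_integral (\<i> * of_real e) (of_real e) + \<i> * of_real pi / of_real a
    = (kernel_integral (- of_real e) (\<i> * of_real e) - D1)
      + (kernel_integral (\<i> * of_real e) (of_real e) - D2)"
    by (simp add: algebra_simps)
  then have "norm (kernel_integral (- of_real e) (\<i> * of_real e)
      + kernel_integral (\<i> * of_real e) (of_real e) + \<i> * of_real pi / of_real a)
    \<le> norm (kernel_integral (- of_real e) (\<i> * of_real e) - D1)
      + norm (kernel_integral (\<i> * of_real e) (of_real e) - D2)"
    by (simp only: norm_triangle_ineq)
  also have "\<dots> \<le> K * (2 * e) + K * (2 * e)"
    using G1 G2 by (rule add_mono)
  finally show ?thesis
    by (simp add: algebra_simps)
qed

lemma norm_kernel_integral_large_rectangle: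
  assumes R: "0 < R" and small: "a / R + b * R powr (\<rho> - 1) \<le> 1 / 2"
  shows "norm (kernel_integral (of_real R) (of_real R + \<i> * of_real R)
      + kernel_integral (of_real R + \<i> * of_real R) (\<i> * of_real R)
      + kernel_integral (\<i> * of_real R) (- of_real R + \<i> * of_real R)
      + kernel_integral (- of_real R + \<i> * of_real R) (- of_real R)) \<le> 8 / R"
proof -
  have edge: "norm (kernel_integral p q) \<le> 2 / R"
    if "convex Q" "Q \<subseteq> {z. 0 \<le> Im z \<and> R \<le> norm z}" "p \<in> Q" "q \<in> Q" "norm (q - p) = R" for Q p q
    using norm_kernel_integral_le_far[OF that(1-4) R small] that(5) R
    by (simp add: power2_eq_square)
  have far: "R \<le> Re z \<Longrightarrow> R \<le> norm z" "R \<le> Im z \<Longrightarrow> R \<le> norm z" "Re z \<le> - R \<Longrightarrow> R \<le> norm z"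
    for z
    using abs_Re_le_cmod[of z] abs_Im_le_cmod[of z] by linarith+
  have E1: "norm (kernel_integral (of_real R) (of_real R + \<i> * of_real R)) \<le> 2 / R"
    by (rule edge[OF convex_Int[OF convex_halfspace_Im_ge[of 0] convex_halfspace_Re_ge[of R]]])
      (use R far in \<open>auto simp: norm_mult\<close>)
  have E2: "norm (kernel_integral (of_real R + \<i> * of_real R) (\<i> * of_real R)) \<le> 2 / R"
    by (rule edge[OF convex_Int[OF convex_halfspace_Im_ge[of 0] convex_halfspace_Im_ge[of R]]])
      (use R far in \<open>auto simp: norm_mult\<close>)
  have E3: "norm (kernel_integral (\<i> * of_real R) (- of_real R + \<i> * of_real R)) \<le> 2 / R"
    by (rule edge[OF convex_Int[OF convex_halfspace_Im_ge[of 0] convex_halfspace_Im_ge[of R]]])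
      (use R far in \<open>auto simp: norm_mult\<close>)
  have E4: "norm (kernel_integral (- of_real R + \<i> * of_real R) (- of_real R)) \<le> 2 / R"
    by (rule edge[OF convex_Int[OF convex_halfspace_Im_ge[of 0] convex_halfspace_Re_le[of "- R"]]])
      (use R far in \<open>auto simp: norm_mult\<close>)
  show ?thesis
    by (rule order_trans[OF norm_triangle_le[OF add_mono[OF norm_triangle_le[OF add_mono[OF
          norm_triangle_le[OF add_mono[OF E1 E2]] E3]] E4]]]) simp
qed

lemma integral_spectral_density_estimate:
  assumes e: "0 < e" "e < R"
    and small_R: "a / R + b * R powr (\<rho> - 1) \<le> 1 / 2" and small_e: "e + b * e powr \<rho> \<le> a / 2"
  shows "\<bar>integral {e..R} (spectral_density \<rho> a b) - pi / a\<bar>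
    \<le> 8 / R + 4 * e * (2 * (1 + b * (e / 2) powr (\<rho> - 1)) / a\<^sup>2)"
proof -
  let ?A = "kernel_integral (- of_real R) (- of_real e)"
  let ?P = "kernel_integral (of_real e) (of_real R)"
  let ?G = "kernel_integral (- of_real e) (\<i> * of_real e)
      + kernel_integral (\<i> * of_real e) (of_real e)"
  let ?E = "kernel_integral (of_real R) (of_real R + \<i> * of_real R)
      + kernel_integral (of_real R + \<i> * of_real R) (\<i> * of_real R)
      + kernel_integral (\<i> * of_real R) (- of_real R + \<i> * of_real R)
      + kernel_integral (- of_real R + \<i> * of_real R) (- of_real R)"
  have "?A + ?G + ?P + ?E = 0"
    using kernel_integral_indented_rectangle[OF e] by (simp add: add.assoc)
  then have "?A = \<i> * of_real pi / of_real a - (?G + \<i> * of_real pi / of_real a) - ?P - ?E"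
    by (simp add: algebra_simps eq_neg_iff_add_eq_0)
  then have "Im ?A = pi / a - Im (?G + \<i> * of_real pi / of_real a) - Im ?E"
    using Im_kernel_integral_real_axis(2)[OF e] ab by simp
  then have "\<bar>integral {e..R} (spectral_density \<rho> a b) - pi / a\<bar>
      \<le> norm (?G + \<i> * of_real pi / of_real a) + norm ?E"
    using Im_kernel_integral_real_axis(1)[OF e]
      abs_Im_le_cmod[of "?G + \<i> * of_real pi / of_real a"] abs_Im_le_cmod[of ?E]
    by linarith
  then show ?thesis
    using norm_kernel_integral_small_detour[OF e(1) small_e]
      norm_kernel_integral_large_rectangle[OF _ small_R] e
    by (simp add: add.assoc)
qed

lemma integral_spectral_density_tendsto:
  "(\<lambda>n. integral {1 / real (Suc n)..real (Suc n)} (spectral_density \<rho> a b)) \<longlonglongrightarrow> pi / a"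
proof -
  define e :: "nat \<Rightarrow> real" where "e n = 1 / real (Suc n)" for n
  define R :: "nat \<Rightarrow> real" where "R n = real (Suc n)" for n
  have "(\<lambda>n. a / R n + b * R n powr (\<rho> - 1)) \<longlonglongrightarrow> 0"
    using \<rho> unfolding R_def by real_asymp
  then have "eventually (\<lambda>n. a / R n + b * R n powr (\<rho> - 1) < 1 / 2) sequentially"
    by (rule order_tendstoD(2)) simp
  then have small_R: "eventually (\<lambda>n. a / R n + b * R n powr (\<rho> - 1) \<le> 1 / 2) sequentially"
    by eventually_elim simp
  have "(\<lambda>n. e n + b * e n powr \<rho>) \<longlonglongrightarrow> 0"
    using \<rho> unfolding e_def by real_asymp
  then have "eventually (\<lambda>n. e n + b * e n powr \<rho> < a / 2) sequentially"
    by (rule order_tendstoD(2)) (use ab in simp)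
  then have small_e: "eventually (\<lambda>n. e n + b * e n powr \<rho> \<le> a / 2) sequentially"
    by eventually_elim simp
  have e_R: "eventually (\<lambda>n. 0 < e n \<and> e n < R n) sequentially"
  proof (rule eventually_sequentiallyI[of 1])
    fix n :: nat assume "1 \<le> n"
    then have "0 < e n" "e n \<le> 1" "1 < R n"
      by (simp_all add: e_def R_def)
    then show "0 < e n \<and> e n < R n"
      by linarith
  qed
  have bound_lim: "(\<lambda>n. 8 / R n + 4 * e n * (2 * (1 + b * (e n / 2) powr (\<rho> - 1)) / a\<^sup>2)) \<longlonglongrightarrow> 0"
    using \<rho> ab unfolding e_def R_def by real_asymp
  have "eventually (\<lambda>n. norm (integral {e n..R n} (spectral_density \<rho> a b) - pi / a)
      \<le> 8 / R n + 4 * e n * (2 * (1 + b * (e n / 2) powr (\<rho> - 1)) / a\<^sup>2)) sequentially"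
    using small_R small_e e_R
  proof eventually_elim
    case (elim n)
    then show ?case
      unfolding real_norm_def by (intro integral_spectral_density_estimate) auto
  qed
  from Lim_null_comparison[OF this bound_lim] show ?thesis
    unfolding e_def R_def by (simp add: LIM_zero_iff)
qed

lemma spectral_density_integral:
  shows "set_integrable lborel {0<..} (spectral_density \<rho> a b)"
    and "(LBINT r:{0<..}. spectral_density \<rho> a b r) = pi / a"
  using set_integral_Ioi_nonneg_limit[OF continuous_on_spectral_density[OF \<rho> ab] _
      integral_spectral_density_tendsto] spectral_density_pos[OF \<rho> ab]
  by (auto intro: less_imp_le)

end

lemma A_rho_eq_laplace_transform:
  assumes "\<gamma> \<noteq> 0"
  shows "A_rho \<rho> \<gamma> lam t
    = \<gamma> / pi * laplace_transform (\<lambda>r. lam / \<gamma> * spectral_density \<rho> lam (lam * \<gamma>) r) t"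
proof -
  have "E * (lam\<^sup>2 * P * S) / Q = E * (lam / \<gamma> * (lam * \<gamma> * P * S / Q))" for E P S Q :: real
    using assms by (simp add: power2_eq_square)
  then show ?thesis
    unfolding A_rho_def laplace_transform_def spectral_density_def by (simp only:)
qed

theorem lemma2p3:
  fixes \<rho> \<gamma> lam :: real
  assumes "0 < \<rho>" "\<rho> < 1" "0 < \<gamma>" "0 < lam"
  shows "A_rho \<rho> \<gamma> lam 0 = 1
    \<and> (\<forall>t>0. 0 < A_rho \<rho> \<gamma> lam t \<and> A_rho \<rho> \<gamma> lam t < 1)
    \<and> (\<forall>t>0. \<exists>D. ((\<lambda>s. A_rho \<rho> \<gamma> lam s) has_real_derivative D) (at t) \<and> D < 0)"
proof -
  define f where "f = (\<lambda>r. lam / \<gamma> * spectral_density \<rho> lam (lam * \<gamma>) r)"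
  have A: "A_rho \<rho> \<gamma> lam = (\<lambda>t. \<gamma> / pi * laplace_transform f t)"
    using A_rho_eq_laplace_transform[of \<gamma>] assms by (simp add: f_def fun_eq_iff)
  have density: "0 < \<rho>" "\<rho> < 1" "0 < lam" "0 < lam * \<gamma>"
    using assms by auto
  have f: "set_integrable lborel {0<..} f" "\<And>r. 0 < r \<Longrightarrow> 0 < f r"
    using spectral_density_integral(1)[OF density] spectral_density_pos[OF density] assms
    by (auto simp: f_def)
  have f0: "laplace_transform f 0 = pi / \<gamma>"
    using spectral_density_integral(2)[OF density] assms by (simp add: laplace_transform_def f_def)
  have "0 < laplace_transform f t \<and> laplace_transform f t < pi / \<gamma>" if "0 < t" for t
    using laplace_transform_pos[OF f] laplace_transform_less_laplace_transform_0[OF f that] that f0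
    by simp
  moreover have "\<exists>D. ((\<lambda>s. \<gamma> / pi * laplace_transform f s) has_real_derivative D) (at t) \<and> D < 0"
    if "0 < t" for t
    using laplace_transform_has_negative_derivative[OF f that] assms
    by (metis DERIV_cmult divide_pos_pos mult_pos_neg pi_gt_zero)
  ultimately show ?thesis
    using assms f0 by (auto simp: A field_simps)
qed

end
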